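(* For every metric space $(X,d)$, the upper Vietoris topology and the Scott topology on $\mathsf{K}((X,d))$ coincide.
   Context: For a metric space, $\mathsf{K}(X)$ is the set of nonempty compact subsets, ordered by reverse inclusion. Scott topology on a poset: upper sets $U$ such that every directed $D$ whose supremum exists and lies in $U$ meets $U$ (a family in $\mathsf{K}(X)$ has a supremum iff its intersection lies in $\mathsf{K}(X)$, and then it is the intersection). Upper Vietoris topology: base $\Box U=\{K:K\subseteq U\}$, $U$ open. *)

theory Defs
  imports "HOL-Analysis.Analysis"
begin

text \<open>K(X): nonempty compact subsets of the space, ordered by reverse inclusion
  (A \<le> B iff B \<subseteq> A).\<close>
definition Kspace :: "'a topology \<Rightarrow> 'a set set" where
  "Kspace X = {K. compactin X K \<and> K \<noteq> {}}"

definition Kle :: "'a set \<Rightarrow> 'a set \<Rightarrow> bool" where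
  "Kle A B \<longleftrightarrow> B \<subseteq> A"

definition K_upper :: "'a topology \<Rightarrow> 'a set set \<Rightarrow> bool" where
  "K_upper X U \<longleftrightarrow> U \<subseteq> Kspace X \<and> (\<forall>A\<in>U. \<forall>B\<in>Kspace X. Kle A B \<longrightarrow> B \<in> U)"

definition K_directed :: "'a topology \<Rightarrow> 'a set set \<Rightarrow> bool" where
  "K_directed X D \<longleftrightarrow> D \<subseteq> Kspace X \<and> D \<noteq> {} \<and>
     (\<forall>A\<in>D. \<forall>B\<in>D. \<exists>C\<in>D. Kle A C \<and> Kle B C)"

definition K_is_sup :: "'a topology \<Rightarrow> 'a set set \<Rightarrow> 'a set \<Rightarrow> bool" where
  "K_is_sup X D s \<longleftrightarrow> s \<in> Kspace X \<and> (\<forall>A\<in>D. Kle A s) \<and>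
     (\<forall>t\<in>Kspace X. (\<forall>A\<in>D. Kle A t) \<longrightarrow> Kle s t)"

definition scott_open :: "'a topology \<Rightarrow> 'a set set \<Rightarrow> bool" where
  "scott_open X U \<longleftrightarrow> K_upper X U \<and>
     (\<forall>D s. K_directed X D \<and> K_is_sup X D s \<and> s \<in> U \<longrightarrow> D \<inter> U \<noteq> {})"

definition vbox :: "'a topology \<Rightarrow> 'a set \<Rightarrow> 'a set set" where
  "vbox X V = {K \<in> Kspace X. K \<subseteq> V}"

definition upper_vietoris_open :: "'a topology \<Rightarrow> 'a set set \<Rightarrow> bool" where
  "upper_vietoris_open X U \<longleftrightarrow>
     (\<exists>\<V>. \<V> \<subseteq> {vbox X V | V. openin X V} \<and> U = \<Union>\<V>)"

end

theory Submission
  imports Defs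
begin

text \<open>A directed family of compact sets whose intersection lies inside an open set \<open>W\<close> has,
  by compactness, a member inside \<open>W\<close>; in a Hausdorff space the supremum of a directed family
  is its intersection, so every box \<open>\<box>W\<close> is Scott open, and so is every union of boxes.

  Conversely, let \<open>U\<close> be Scott open and \<open>K \<in> U\<close>. If no box of an \<open>r\<close>-neighbourhood of \<open>K\<close> lay
  inside \<open>U\<close>, we could pick compact sets \<open>C\<^sub>n \<notin> U\<close> within distance \<open>1/(n+1)\<close> of \<open>K\<close>. Every open
  neighbourhood of \<open>K\<close> contains all but finitely many \<open>C\<^sub>n\<close> (Lebesgue number), so the tails
  \<open>K \<union> \<Union>\<^sub>m\<^sub>\<ge>\<^sub>n C\<^sub>m\<close> are compact and form a decreasing chain with intersection \<open>K\<close>. Scott openness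
  puts one tail in \<open>U\<close>, and upward closure then puts the corresponding \<open>C\<^sub>n\<close> in \<open>U\<close>.\<close>

lemma K_directed_finite_lower_bound:
  assumes "K_directed X D" "finite F" "F \<subseteq> D"
  shows "\<exists>C\<in>D. \<forall>A\<in>F. C \<subseteq> A"
  using assms(2,3)
proof (induction F rule: finite_induct)
  case empty
  then show ?case using assms(1) unfolding K_directed_def by blast
next
  case (insert x F)
  then obtain C where C: "C \<in> D" "\<forall>A\<in>F. C \<subseteq> A" by auto
  with insert assms(1) obtain E where "E \<in> D" "E \<subseteq> x" "E \<subseteq> C"
    unfolding K_directed_def Kle_def by blast
  then show ?case using C by blast
qed

lemma K_directed_Inter_subset_openin:
  assumes X: "Hausdorff_space X" and D: "K_directed X D"
    and W: "openin X W" and DW: "\<Inter>D \<subseteq> W"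
  shows "\<exists>A\<in>D. A \<subseteq> W"
proof -
  have compact: "compactin X A" if "A \<in> D" for A
    using D that unfolding K_directed_def Kspace_def by blast
  have closed: "closedin X A" if "A \<in> D" for A
    using compactin_imp_closedin[OF X compact[OF that]] .
  obtain A0 where A0: "A0 \<in> D" using D unfolding K_directed_def by blast
  have "A0 - W = A0 \<inter> (topspace X - W)"
    using compactin_subset_topspace[OF compact[OF A0]] by blast
  then have "compactin X (A0 - W)"
    using compact_Int_closedin[OF compact[OF A0] closedin_diff[OF closedin_topspace W]] by simp
  moreover have "A0 - W \<subseteq> \<Union>((\<lambda>A. topspace X - A) ` D)"
    using DW compact[OF A0] compactin_subset_topspace by fastforce
  moreover have "\<forall>V\<in>(\<lambda>A. topspace X - A) ` D. openin X V"
    using closed by blast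
  ultimately obtain F where F: "finite F" "F \<subseteq> (\<lambda>A. topspace X - A) ` D" "A0 - W \<subseteq> \<Union>F"
    unfolding compactin_def by meson
  then obtain G where G: "finite G" "G \<subseteq> D" "F = (\<lambda>A. topspace X - A) ` G"
    by (meson finite_subset_image)
  obtain C where C: "C \<in> D" "\<forall>A\<in>insert A0 G. C \<subseteq> A"
    using K_directed_finite_lower_bound[OF D, of "insert A0 G"] G A0 by auto
  have "C \<subseteq> W"
    using C F G by blast
  with C show ?thesis by blast
qed

lemma K_is_sup_Inter:
  assumes "\<Inter>D \<in> Kspace X"
  shows "K_is_sup X D (\<Inter>D)"
  using assms unfolding K_is_sup_def Kle_def by blast

lemma K_is_sup_imp_Inter_subset:
  assumes X: "Hausdorff_space X" and D: "K_directed X D" and s: "K_is_sup X D s"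
  shows "\<Inter>D \<subseteq> s"
proof (cases "\<Inter>D = {}")
  case False
  have compact: "compactin X A" if "A \<in> D" for A
    using D that unfolding K_directed_def Kspace_def by blast
  obtain A0 where "A0 \<in> D" using D unfolding K_directed_def by blast
  then have "compactin X (\<Inter>D)"
    using closed_compactin_Inter compact compactin_imp_closedin[OF X] by metis
  with False have "\<Inter>D \<in> Kspace X" unfolding Kspace_def by blast
  with s show ?thesis
    unfolding K_is_sup_def Kle_def by blast
qed simp

lemma scott_open_vbox:
  assumes X: "Hausdorff_space X" and W: "openin X W"
  shows "scott_open X (vbox X W)"
  unfolding scott_open_def
proof (intro conjI allI impI)
  show "K_upper X (vbox X W)"
    unfolding K_upper_def vbox_def Kle_def by blast
next
  fix D s assume "K_directed X D \<and> K_is_sup X D s \<and> s \<in> vbox X W"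
  then have D: "K_directed X D" and "\<Inter>D \<subseteq> W"
    using K_is_sup_imp_Inter_subset[OF X] unfolding vbox_def by blast+
  then obtain A where "A \<in> D" "A \<subseteq> W"
    using K_directed_Inter_subset_openin[OF X D W] by blast
  with D show "D \<inter> vbox X W \<noteq> {}"
    unfolding K_directed_def vbox_def by blast
qed

lemma scott_open_Union:
  assumes "\<And>U. U \<in> \<U> \<Longrightarrow> scott_open X U"
  shows "scott_open X (\<Union>\<U>)"
  using assms unfolding scott_open_def K_upper_def by blast

lemma upper_vietoris_open_imp_scott_open:
  assumes "Hausdorff_space X" "upper_vietoris_open X U"
  shows "scott_open X U"
proof -
  obtain \<V> where \<V>: "\<V> \<subseteq> {vbox X V | V. openin X V}" "U = \<Union>\<V>"
    using assms(2) unfolding upper_vietoris_open_def by blast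
  have "scott_open X B" if "B \<in> \<V>" for B
    using that \<V>(1) scott_open_vbox[OF assms(1)] by blast
  with \<V>(2) show ?thesis
    by (simp add: scott_open_Union)
qed

lemma upper_vietoris_openI:
  assumes "\<And>K. K \<in> U \<Longrightarrow> \<exists>V. openin X V \<and> K \<in> vbox X V \<and> vbox X V \<subseteq> U"
  shows "upper_vietoris_open X U"
  unfolding upper_vietoris_open_def
  by (rule exI[of _ "{vbox X V | V. openin X V \<and> vbox X V \<subseteq> U}"]) (use assms in blast)

lemma compactin_Un_Union_eventually_subset:
  fixes C :: "nat \<Rightarrow> 'a set"
  assumes K: "compactin X K" and C: "\<And>m. compactin X (C m)"
    and eventually: "\<And>W. openin X W \<Longrightarrow> K \<subseteq> W \<Longrightarrow> \<exists>N. \<forall>m\<ge>N. C m \<subseteq> W"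
  shows "compactin X (K \<union> \<Union>(range C))"
  unfolding compactin_def
proof (intro conjI allI impI)
  show "K \<union> \<Union>(range C) \<subseteq> topspace X"
    using K C compactin_subset_topspace by blast
next
  fix \<U> assume \<U>: "Ball \<U> (openin X) \<and> K \<union> \<Union>(range C) \<subseteq> \<Union>\<U>"
  then obtain F0 where F0: "finite F0" "F0 \<subseteq> \<U>" "K \<subseteq> \<Union>F0"
    using K unfolding compactin_def by (meson le_sup_iff)
  then obtain N where N: "\<forall>m\<ge>N. C m \<subseteq> \<Union>F0"
    using eventually \<U> by (meson openin_Union subsetD)
  have "compactin X (\<Union>(C ` {..<N}))"
    by (intro compactin_Union) (auto intro: C)
  moreover have "\<Union>(C ` {..<N}) \<subseteq> \<Union>\<U>"
    using \<U> by blast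
  ultimately obtain F1 where F1: "finite F1" "F1 \<subseteq> \<U>" "\<Union>(C ` {..<N}) \<subseteq> \<Union>F1"
    using \<U> unfolding compactin_def by meson
  have "C m \<subseteq> \<Union>(F0 \<union> F1)" for m
    using N F1(3) by (cases "m < N") (auto simp: not_less)
  with F0(3) have "K \<union> \<Union>(range C) \<subseteq> \<Union>(F0 \<union> F1)"
    by blast
  with F0 F1 show "\<exists>\<F>. finite \<F> \<and> \<F> \<subseteq> \<U> \<and> K \<union> \<Union>(range C) \<subseteq> \<Union>\<F>"
    by (intro exI[of _ "F0 \<union> F1"]) auto
qed

lemma scott_open_eventually_mem:
  fixes C :: "nat \<Rightarrow> 'a set"
  assumes X: "t1_space X" and U: "scott_open X U" and KU: "K \<in> U"
    and C: "\<And>m. C m \<in> Kspace X"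
    and eventually: "\<And>W. openin X W \<Longrightarrow> K \<subseteq> W \<Longrightarrow> \<exists>N. \<forall>m\<ge>N. C m \<subseteq> W"
  shows "\<exists>m. C m \<in> U"
proof -
  define L where "L n = K \<union> \<Union>(range (\<lambda>m. C (m + n)))" for n
  have upper: "K_upper X U"
    using U unfolding scott_open_def by blast
  have K: "K \<in> Kspace X"
    using upper KU unfolding K_upper_def by blast
  have L: "L n \<in> Kspace X" for n
  proof -
    have "compactin X (L n)"
      unfolding L_def
    proof (rule compactin_Un_Union_eventually_subset)
      show "compactin X K" "compactin X (C (m + n))" for m
        using K C unfolding Kspace_def by blast+
    next
      fix W assume "openin X W" "K \<subseteq> W"
      then obtain N where "\<forall>m\<ge>N. C m \<subseteq> W"
        using eventually by blast
      then show "\<exists>N. \<forall>m\<ge>N. C (m + n) \<subseteq> W"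
        by (metis trans_le_add1)
    qed
    with K show ?thesis
      unfolding L_def Kspace_def by auto
  qed
  have L_antimono: "L n' \<subseteq> L n" if "n \<le> n'" for n n'
    unfolding L_def using that by clarsimp (metis add.assoc le_add_diff_inverse2)
  have directed: "K_directed X (range L)"
    unfolding K_directed_def Kle_def using L
    by auto (metis L_antimono max.cobounded1 max.cobounded2)
  have "\<Inter>(range L) = K"
  proof
    show "K \<subseteq> \<Inter>(range L)"
      unfolding L_def by blast
  next
    show "\<Inter>(range L) \<subseteq> K"
    proof
      fix x assume x: "x \<in> \<Inter>(range L)"
      show "x \<in> K"
      proof (rule ccontr)
        assume "x \<notin> K"
        then have "K \<subseteq> topspace X - {x}"
          using K compactin_subset_topspace unfolding Kspace_def by blast
        moreover have "openin X (topspace X - {x})"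
          using X by (simp add: t1_space_openin_delete_alt)
        ultimately obtain N where "\<forall>m\<ge>N. C m \<subseteq> topspace X - {x}"
          using eventually by blast
        moreover have "x \<in> L N"
          using x by blast
        ultimately show False
          using \<open>x \<notin> K\<close> le_add2 unfolding L_def by blast
      qed
    qed
  qed
  then have "K_is_sup X (range L) K"
    using K_is_sup_Inter K by metis
  then obtain n where "L n \<in> U"
    using U directed KU unfolding scott_open_def by blast
  moreover have "Kle (L n) (C n)"
    unfolding L_def Kle_def using rangeI[of "\<lambda>m. C (m + n)" 0] by auto
  ultimately show ?thesis
    using upper C unfolding K_upper_def by blast
qed

context Metric_space
begin

lemma compactin_Union_mball_subset:
  assumes "compactin mtopology K" "openin mtopology W" "K \<subseteq> W"
  shows "\<exists>r>0. (\<Union>k\<in>K. mball k r) \<subseteq> W"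
  using lebesgue_number[of K "{W}"] assms by auto

lemma scott_open_imp_upper_vietoris_open:
  assumes U: "scott_open mtopology U"
  shows "upper_vietoris_open mtopology U"
proof (rule upper_vietoris_openI)
  fix K assume KU: "K \<in> U"
  then have K: "K \<in> Kspace mtopology"
    using U unfolding scott_open_def K_upper_def by blast
  then have K_compact: "compactin mtopology K" and KM: "K \<subseteq> M"
    unfolding Kspace_def using compactin_subset_topspace by fastforce+
  have "\<exists>r>0. vbox mtopology (\<Union>k\<in>K. mball k r) \<subseteq> U"
  proof (rule ccontr)
    assume "\<not> ?thesis"
    then have "\<forall>n::nat. \<exists>C. C \<in> vbox mtopology (\<Union>k\<in>K. mball k (1 / Suc n)) \<and> C \<notin> U"
      by (metis of_nat_0_less_iff subsetI zero_less_Suc zero_less_divide_1_iff)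
    then obtain C where C: "\<And>n. C n \<in> vbox mtopology (\<Union>k\<in>K. mball k (1 / Suc n))"
      and C_notin: "\<And>n. C n \<notin> U"
      by metis
    have "\<exists>m. C m \<in> U"
    proof (rule scott_open_eventually_mem[OF _ U KU])
      show "t1_space mtopology"
        by (simp add: Hausdorff_imp_t1_space Hausdorff_space_mtopology)
      show "C m \<in> Kspace mtopology" for m
        using C unfolding vbox_def by blast
    next
      fix W assume "openin mtopology W" "K \<subseteq> W"
      then obtain r where r: "r > 0" "(\<Union>k\<in>K. mball k r) \<subseteq> W"
        using compactin_Union_mball_subset K_compact by blast
      obtain N where N: "inverse (Suc N) < r"
        using reals_Archimedean[OF r(1)] by blast
      have "C m \<subseteq> W" if "m \<ge> N" for m
      proof -
        have "1 / Suc m \<le> inverse (Suc N)"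
          using that by (simp add: inverse_eq_divide frac_le)
        then have "(\<Union>k\<in>K. mball k (1 / Suc m)) \<subseteq> (\<Union>k\<in>K. mball k r)"
          using N by fastforce
        then show ?thesis
          using C[of m] r(2) unfolding vbox_def by blast
      qed
      then show "\<exists>N. \<forall>m\<ge>N. C m \<subseteq> W"
        by blast
    qed
    with C_notin show False
      by blast
  qed
  then obtain r where r: "r > 0" "vbox mtopology (\<Union>k\<in>K. mball k r) \<subseteq> U"
    by blast
  moreover have "openin mtopology (\<Union>k\<in>K. mball k r)"
    by blast
  moreover have "K \<in> vbox mtopology (\<Union>k\<in>K. mball k r)"
    using K KM r(1) unfolding vbox_def by fastforce
  ultimately show "\<exists>V. openin mtopology V \<and> K \<in> vbox mtopology V \<and> vbox mtopology V \<subseteq> U"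
    by blast
qed

end

theorem mainTheorem14:
  fixes M :: "'a set" and d :: "'a \<Rightarrow> 'a \<Rightarrow> real"
  assumes "Metric_space M d"
  shows "{U. upper_vietoris_open (Metric_space.mtopology M d) U}
       = {U. scott_open (Metric_space.mtopology M d) U}"
proof -
  interpret Metric_space M d by fact
  show ?thesis
    using upper_vietoris_open_imp_scott_open[OF Hausdorff_space_mtopology]
      scott_open_imp_upper_vietoris_open
    by blast
qed

end
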